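(* Let $X$ be a countable infinite set, $\mathcal{I}$ a $p^+$ and hereditarily meager ideal on $X$, and $\tau$ an $\mathcal{I}$-crowded topology on $X$ with $\pi w(\tau)<\mathfrak{m}_c$. Suppose $\langle D_i:i\in\omega\rangle$ is a decreasing sequence of $(\mathcal{I},\tau)$-crowded $\tau$-dense subsets of $X$. Then there are finite sets $K_i\subseteq D_i$ ($i\in\omega$) such that $\bigcup_{i\in\omega}K_i$ is $\tau$-dense and $(\mathcal{I},\tau)$-crowded.
   Context: An ideal on $X$ is a family of subsets of $X$ closed under subsets and finite unions; all ideals are assumed proper ($X\notin\mathcal{I}$) and free (every finite subset of $X$ is in $\mathcal{I}$). $\mathcal{I}^+=\mathcal{P}(X)\setminus\mathcal{I}$. Subsets of $X$ are identified with points of $2^X$. $\mathcal{I}$ is hereditarily meager if for every $A\in\mathcal{I}^+$, $\mathcal{I}\cap\mathcal{P}(A)$ is meager in $2^A$. $\mathcal{I}$ is $p^+$ if for every decreasing sequence $(A_n)_n$ of sets in $\mathcal{I}^+$ there is $A\in\mathcal{I}^+$ with $A\setminus A_n$ finite for all $n$. A topology $\tau$ on $X$ is $\mathcal{I}$-crowded if $\tau\cap\mathcal{I}=\{\emptyset\}$. A set $A\subseteq X$ is $(\mathcal{I},\tau)$-crowded if for every $U\in\tau$, $A\cap U$ is either empty or in $\mathcal{I}^+$. $\mathfrak{m}_c$ is the least cardinal $\kappa$ such that MA$(\kappa)$ for countable posets fails. $\pi w$ denotes $\pi$-weight. *)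

theory Defs
  imports "HOL-Analysis.Analysis" "HOL-Library.Equipollence"
begin

definition ideal_on :: "'a set \<Rightarrow> 'a set set \<Rightarrow> bool" where
  "ideal_on X I \<longleftrightarrow> I \<subseteq> Pow X
     \<and> (\<forall>A B. A \<in> I \<and> B \<subseteq> A \<longrightarrow> B \<in> I)
     \<and> (\<forall>A B. A \<in> I \<and> B \<in> I \<longrightarrow> A \<union> B \<in> I)
     \<and> X \<notin> I
     \<and> (\<forall>F. finite F \<and> F \<subseteq> X \<longrightarrow> F \<in> I)"

definition positive_sets :: "'a set \<Rightarrow> 'a set set \<Rightarrow> 'a set set" where
  "positive_sets X I = Pow X - I"

definition p_plus :: "'a set \<Rightarrow> 'a set set \<Rightarrow> bool" where
  "p_plus X I \<longleftrightarrow> (\<forall>A :: nat \<Rightarrow> 'a set.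
      (\<forall>n. A n \<in> positive_sets X I) \<and> (\<forall>n. A (Suc n) \<subseteq> A n) \<longrightarrow>
      (\<exists>B \<in> positive_sets X I. \<forall>n. finite (B - A n)))"

definition nowhere_dense_in :: "'b topology \<Rightarrow> 'b set \<Rightarrow> bool" where
  "nowhere_dense_in T S \<longleftrightarrow> T interior_of (T closure_of S) = {}"

definition meager_in :: "'b topology \<Rightarrow> 'b set \<Rightarrow> bool" where
  "meager_in T S \<longleftrightarrow> (\<exists>F :: nat \<Rightarrow> 'b set.
      (\<forall>n. nowhere_dense_in T (F n)) \<and> S \<subseteq> (\<Union>n. F n))"

text \<open>The Cantor space 2^A: product of discrete two-point spaces over A;
  a subset B of A is identified with its characteristic function on A.\<close>
definition cantor_space :: "'a set \<Rightarrow> ('a \<Rightarrow> bool) topology" where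
  "cantor_space A = product_topology (\<lambda>_. discrete_topology (UNIV :: bool set)) A"

definition char_point :: "'a set \<Rightarrow> 'a set \<Rightarrow> ('a \<Rightarrow> bool)" where
  "char_point A B = (\<lambda>x\<in>A. x \<in> B)"

definition hereditarily_meager :: "'a set \<Rightarrow> 'a set set \<Rightarrow> bool" where
  "hereditarily_meager X I \<longleftrightarrow> (\<forall>A \<in> positive_sets X I.
      meager_in (cantor_space A) (char_point A ` (I \<inter> Pow A)))"

definition I_crowded_topology :: "'a set set \<Rightarrow> 'a topology \<Rightarrow> bool" where
  "I_crowded_topology I \<tau> \<longleftrightarrow> {U. openin \<tau> U} \<inter> I = {{}}"

definition I_tau_crowded :: "'a set \<Rightarrow> 'a set set \<Rightarrow> 'a topology \<Rightarrow> 'a set \<Rightarrow> bool" where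
  "I_tau_crowded X I \<tau> A \<longleftrightarrow>
     (\<forall>U. openin \<tau> U \<longrightarrow> A \<inter> U = {} \<or> A \<inter> U \<in> positive_sets X I)"

definition dense_in :: "'a topology \<Rightarrow> 'a set \<Rightarrow> bool" where
  "dense_in \<tau> D \<longleftrightarrow> D \<subseteq> topspace \<tau> \<and> \<tau> closure_of D = topspace \<tau>"

definition pi_base :: "'a topology \<Rightarrow> 'a set set \<Rightarrow> bool" where
  "pi_base \<tau> \<B> \<longleftrightarrow> (\<forall>B\<in>\<B>. openin \<tau> B \<and> B \<noteq> {})
     \<and> (\<forall>U. openin \<tau> U \<and> U \<noteq> {} \<longrightarrow> (\<exists>B\<in>\<B>. B \<subseteq> U))"

text \<open>Countable posets are represented (up to isomorphism) on subsets of nat.\<close>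
definition countable_poset :: "nat set \<Rightarrow> (nat \<Rightarrow> nat \<Rightarrow> bool) \<Rightarrow> bool" where
  "countable_poset P le \<longleftrightarrow> P \<noteq> {}
     \<and> (\<forall>p\<in>P. le p p)
     \<and> (\<forall>p\<in>P. \<forall>q\<in>P. \<forall>r\<in>P. le p q \<and> le q r \<longrightarrow> le p r)
     \<and> (\<forall>p\<in>P. \<forall>q\<in>P. le p q \<and> le q p \<longrightarrow> p = q)"

definition dense_poset :: "nat set \<Rightarrow> (nat \<Rightarrow> nat \<Rightarrow> bool) \<Rightarrow> nat set \<Rightarrow> bool" where
  "dense_poset P le D \<longleftrightarrow> D \<subseteq> P \<and> (\<forall>p\<in>P. \<exists>q\<in>D. le q p)"

definition filter_poset :: "nat set \<Rightarrow> (nat \<Rightarrow> nat \<Rightarrow> bool) \<Rightarrow> nat set \<Rightarrow> bool" where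
  "filter_poset P le G \<longleftrightarrow> G \<subseteq> P \<and> G \<noteq> {}
     \<and> (\<forall>p\<in>G. \<forall>q\<in>P. le p q \<longrightarrow> q \<in> G)
     \<and> (\<forall>p\<in>G. \<forall>q\<in>G. \<exists>r\<in>G. le r p \<and> le r q)"

definition MA_countable :: "'b set \<Rightarrow> bool" where
  "MA_countable S \<longleftrightarrow> (\<forall>P le (\<D> :: 'b \<Rightarrow> nat set).
      countable_poset P le \<and> (\<forall>i\<in>S. dense_poset P le (\<D> i)) \<longrightarrow>
      (\<exists>G. filter_poset P le G \<and> (\<forall>i\<in>S. G \<inter> \<D> i \<noteq> {})))"

text \<open>pi w(tau) < m_c, where m_c is the least cardinal for which MA fails for
  countable posets. Since MA fails at 2^aleph_0, and the set of failing cardinals is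
  upward closed, it suffices to range over failing index sets of type nat set set
  (cardinalities up to 2^continuum). pi w(tau) < m_c iff some pi-base has cardinality
  strictly below every cardinal at which MA fails.\<close>
definition piw_less_mc :: "'a topology \<Rightarrow> bool" where
  "piw_less_mc \<tau> \<longleftrightarrow> (\<exists>\<B>. pi_base \<tau> \<B> \<and>
      (\<forall>S :: nat set set. \<not> MA_countable S \<longrightarrow> \<B> \<prec> S))"

end

theory Submission
  imports Defs
begin

text \<open>For each member \<open>B\<close> of a \<open>\<pi>\<close>-base, the sets \<open>B \<inter> D n\<close> are \<open>I\<close>-positive, so the
  \<open>p\<^sup>+\<close> property yields a positive \<open>A\<^sub>B \<subseteq> B\<close> almost contained in every \<open>D n\<close>, and hereditary
  meagerness covers \<open>I \<inter> Pow A\<^sub>B\<close> by nowhere dense sets \<open>F\<^sub>B\<^sub>,\<^sub>m\<close> of \<open>2\<^bsup>A\<^sub>B\<^esub>\<close>.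
  Finite approximations of the sets \<open>K i\<close>, together with finitely many points promised to stay
  outside \<open>\<Union>i. K i\<close>, form a countable poset.  For each \<open>(B, m)\<close> the conditions that already force
  the trace of \<open>\<Union>i. K i\<close> on \<open>A\<^sub>B\<close> out of \<open>F\<^sub>B\<^sub>,\<^sub>m\<close> are dense: nowhere density lets us fix finitely
  many more coordinates, and since \<open>A\<^sub>B - D n\<close> is finite the new points can be placed in a fresh
  level \<open>K n\<close>.  These are fewer than \<open>m\<^sub>c\<close> dense sets, so MA gives a filter meeting all of them;
  then \<open>(\<Union>i. K i) \<inter> A\<^sub>B \<notin> I\<close> for every \<open>B\<close>, which makes \<open>\<Union>i. K i\<close> dense and crowded.\<close>

lemma MA_countable_UNIV_nat: "MA_countable (UNIV :: nat set)"
  unfolding MA_countable_def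
proof (intro allI impI)
  fix P le and \<D> :: "nat \<Rightarrow> nat set"
  assume poset: "countable_poset P le \<and> (\<forall>i\<in>UNIV. dense_poset P le (\<D> i))"
  then obtain p0 where p0: "p0 \<in> P" unfolding countable_poset_def by blast
  have below: "\<And>k q. q \<in> P \<Longrightarrow> \<exists>r. r \<in> \<D> k \<and> le r q" and \<D>P: "\<And>k. \<D> k \<subseteq> P"
    using poset unfolding dense_poset_def by blast+
  have refl: "\<forall>q\<in>P. le q q" and trans: "\<forall>p\<in>P. \<forall>q\<in>P. \<forall>r\<in>P. le p q \<and> le q r \<longrightarrow> le p r"
    using poset unfolding countable_poset_def by blast+
  define p where "p = rec_nat p0 (\<lambda>k q. SOME r. r \<in> \<D> k \<and> le r q)"
  have p_Suc: "p (Suc k) \<in> \<D> k \<and> le (p (Suc k)) (p k)" if "p k \<in> P" for k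
  proof -
    have "p (Suc k) = (SOME r. r \<in> \<D> k \<and> le r (p k))" by (simp add: p_def)
    then show ?thesis using someI_ex[OF below[OF that]] by simp
  qed
  have pP: "p k \<in> P" for k
    by (induction k) (use p0 p_def p_Suc \<D>P in force)+
  have descending: "le (p (k + d)) (p k)" for k d
  proof (induction d)
    case 0 then show ?case using refl pP by simp
  next
    case (Suc d) then show ?case using trans pP p_Suc[OF pP] by (metis add_Suc_right)
  qed
  define G where "G = {q\<in>P. \<exists>k. le (p k) q}"
  have "filter_poset P le G"
    unfolding filter_poset_def
  proof (intro conjI ballI impI)
    show "G \<subseteq> P" "G \<noteq> {}" using pP refl unfolding G_def by blast+
  next
    fix x q assume "x \<in> G" "q \<in> P" "le x q"
    then show "q \<in> G" unfolding G_def using trans pP by blast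
  next
    fix x q assume "x \<in> G" "q \<in> G"
    then obtain k1 k2 where "le (p k1) x" "le (p k2) q" "x \<in> P" "q \<in> P" unfolding G_def by blast
    moreover have "le (p (max k1 k2)) (p k1)" "le (p (max k1 k2)) (p k2)"
      using descending by (metis le_add_diff_inverse max.cobounded1 max.cobounded2)+
    ultimately show "\<exists>r\<in>G. le r x \<and> le r q"
      using trans pP refl unfolding G_def by blast
  qed
  moreover have "G \<inter> \<D> i \<noteq> {}" for i
    using p_Suc[OF pP] pP refl unfolding G_def by blast
  ultimately show "\<exists>G. filter_poset P le G \<and> (\<forall>i\<in>UNIV. G \<inter> \<D> i \<noteq> {})" by blast
qed

lemma MA_countable_lepoll:
  fixes J :: "'c set" and S :: "'b set"
  assumes "J \<lesssim> S" "MA_countable S"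
  shows "MA_countable J"
  unfolding MA_countable_def
proof (intro allI impI)
  fix P le and \<D> :: "'c \<Rightarrow> nat set"
  assume poset: "countable_poset P le \<and> (\<forall>i\<in>J. dense_poset P le (\<D> i))"
  obtain h where h: "inj_on h J" "h ` J \<subseteq> S" using assms(1) unfolding lepoll_def by blast
  define \<D>' where "\<D>' s = (if s \<in> h ` J then \<D> (inv_into J h s) else P)" for s
  have "dense_poset P le P" using poset unfolding dense_poset_def countable_poset_def by blast
  then have "\<forall>s\<in>S. dense_poset P le (\<D>' s)"
    using poset inv_into_into[of _ h J] unfolding \<D>'_def by auto
  then obtain G where G: "filter_poset P le G" "\<forall>s\<in>S. G \<inter> \<D>' s \<noteq> {}"
    using assms(2)[unfolded MA_countable_def, rule_format, of P le \<D>'] poset by blast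
  have "\<D>' (h i) = \<D> i" if "i \<in> J" for i using h that by (simp add: \<D>'_def)
  then have "\<forall>i\<in>J. G \<inter> \<D> i \<noteq> {}" using G(2) h(2) by (metis image_subset_iff)
  then show "\<exists>G. filter_poset P le G \<and> (\<forall>i\<in>J. G \<inter> \<D> i \<noteq> {})" using G(1) by blast
qed

lemma MA_countable_if_countable: "countable J \<Longrightarrow> MA_countable J"
  using MA_countable_lepoll[OF _ MA_countable_UNIV_nat] unfolding lepoll_def countable_def by blast

lemma MA_countable_generic_filter:
  fixes Q :: "'q set" and le :: "'q \<Rightarrow> 'q \<Rightarrow> bool" and E :: "'j \<Rightarrow> 'q set"
  assumes "MA_countable J" and "countable Q" and "Q \<noteq> {}"
    and refl: "\<forall>p\<in>Q. le p p"
    and trans: "\<forall>p\<in>Q. \<forall>q\<in>Q. \<forall>r\<in>Q. le p q \<and> le q r \<longrightarrow> le p r"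
    and antisym: "\<forall>p\<in>Q. \<forall>q\<in>Q. le p q \<and> le q p \<longrightarrow> p = q"
    and dense: "\<forall>j\<in>J. E j \<subseteq> Q \<and> (\<forall>q\<in>Q. \<exists>r\<in>E j. le r q)"
  shows "\<exists>G \<subseteq> Q. (\<forall>p\<in>G. \<forall>q\<in>G. \<exists>r\<in>G. le r p \<and> le r q) \<and> (\<forall>j\<in>J. G \<inter> E j \<noteq> {})"
proof -
  define e where "e = to_nat_on Q"
  define d where "d = from_nat_into Q"
  have de: "\<And>q. q \<in> Q \<Longrightarrow> d (e q) = q" unfolding d_def e_def using assms(2) by simp
  define le' where "le' a b = le (d a) (d b)" for a b
  have "countable_poset (e ` Q) le'"
    using assms(3) refl unfolding countable_poset_def le'_def
    by (auto simp: de) (use trans antisym in blast)+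
  moreover have "\<forall>j\<in>J. dense_poset (e ` Q) le' (e ` E j)"
    using dense unfolding dense_poset_def le'_def by (auto simp: de subset_iff)
  ultimately obtain Gn where Gn: "filter_poset (e ` Q) le' Gn" "\<forall>j\<in>J. Gn \<inter> e ` E j \<noteq> {}"
    using assms(1)[unfolded MA_countable_def, rule_format, of "e ` Q" le' "\<lambda>j. e ` E j"] by blast
  have "d ` Gn \<subseteq> Q" using Gn(1) de unfolding filter_poset_def by auto
  moreover have "\<forall>p\<in>d ` Gn. \<forall>q\<in>d ` Gn. \<exists>r\<in>d ` Gn. le r p \<and> le r q"
    using Gn(1) unfolding filter_poset_def le'_def by blast
  moreover have "\<forall>j\<in>J. d ` Gn \<inter> E j \<noteq> {}"
    using Gn(2) dense de by (fastforce simp: subset_iff)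
  ultimately show ?thesis by blast
qed

lemma infinite_times_nat_eqpoll:
  assumes "infinite A" shows "A \<times> (UNIV :: nat set) \<approx> A"
proof -
  have "ordLeq2 (card_of (UNIV :: nat set)) (card_of A)" using assms infinite_iff_card_of_nat by blast
  then have "ordIso2 (card_of (A \<times> (UNIV :: nat set))) (card_of A)"
    using card_of_Times_infinite_simps(1)[of A "UNIV :: nat set"] assms by blast
  then show ?thesis using eqpoll_iff_card_of_ordIso by blast
qed

text \<open>A family of subsets of a countable set injects into \<open>nat set set\<close>, the index type over
  which \<open>piw_less_mc\<close> quantifies the failures of MA.\<close>
lemma MA_countable_times_nat_if_lesspoll_failures:
  assumes "countable X" "\<B> \<subseteq> Pow X" "\<forall>S :: nat set set. \<not> MA_countable S \<longrightarrow> \<B> \<prec> S"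
  shows "MA_countable (\<B> \<times> (UNIV :: nat set))"
proof (cases "finite \<B>")
  case True
  then show ?thesis by (intro MA_countable_if_countable countable_SIGMA) (auto intro: countable_finite)
next
  case False
  have "inj_on ((`) (to_nat_on X)) \<B>"
  proof (rule inj_onI)
    fix b1 b2 assume "b1 \<in> \<B>" "b2 \<in> \<B>" "to_nat_on X ` b1 = to_nat_on X ` b2"
    then show "b1 = b2"
      using inj_on_image_eq_iff[OF inj_on_to_nat_on[OF assms(1)]] assms(2) by blast
  qed
  then have \<B>S: "\<B> \<approx> (`) (to_nat_on X) ` \<B>" unfolding eqpoll_def by (blast intro: bij_betw_imageI)
  then have "MA_countable ((`) (to_nat_on X) ` \<B>)"
    using assms(3) unfolding lesspoll_def by blast
  moreover have "\<B> \<times> (UNIV :: nat set) \<lesssim> (`) (to_nat_on X) ` \<B>"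
    using eqpoll_trans[OF infinite_times_nat_eqpoll[OF False] \<B>S] by (rule eqpoll_imp_lepoll)
  ultimately show ?thesis using MA_countable_lepoll by blast
qed

definition cylinder :: "'a set \<Rightarrow> 'a set \<Rightarrow> ('a \<Rightarrow> bool) \<Rightarrow> ('a \<Rightarrow> bool) set" where
  "cylinder A T c = {f \<in> topspace (cantor_space A). \<forall>x\<in>T. f x = c x}"

lemma topspace_cantor_space: "topspace (cantor_space A) = (\<Pi>\<^sub>E i\<in>A. UNIV)"
  unfolding cantor_space_def by simp

lemma cylinder_antimono: "T0 \<subseteq> T \<Longrightarrow> cylinder A T c \<subseteq> cylinder A T0 c"
  unfolding cylinder_def by blast

lemma restrict_in_cylinder: "T \<subseteq> A \<Longrightarrow> restrict c A \<in> cylinder A T c"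
  unfolding cylinder_def topspace_cantor_space by auto

lemma openin_cylinder:
  assumes "finite T" "T \<subseteq> A"
  shows "openin (cantor_space A) (cylinder A T c)"
  unfolding cantor_space_def openin_product_topology_alt
proof (intro ballI)
  fix f assume f: "f \<in> cylinder A T c"
  define U where "U i = (if i \<in> T then {c i} else UNIV)" for i
  have "finite {i \<in> A. U i \<noteq> topspace (discrete_topology UNIV)}"
    using assms(1) by (rule finite_subset[rotated]) (auto simp: U_def)
  moreover have "f \<in> Pi\<^sub>E A U" "Pi\<^sub>E A U \<subseteq> cylinder A T c"
    using f assms(2) by (auto simp: U_def PiE_iff cylinder_def topspace_cantor_space subset_iff)
  ultimately show "\<exists>U. finite {i \<in> A. U i \<noteq> topspace (discrete_topology UNIV)} \<and>
      (\<forall>i\<in>A. openin (discrete_topology UNIV) (U i)) \<and> f \<in> Pi\<^sub>E A U \<and> Pi\<^sub>E A U \<subseteq> cylinder A T c"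
    by auto
qed

lemma cylinder_subset_openin:
  assumes "openin (cantor_space A) W" "f \<in> W"
  obtains T where "finite T" "T \<subseteq> A" "cylinder A T f \<subseteq> W"
proof -
  obtain U where U: "finite {i \<in> A. U i \<noteq> topspace (discrete_topology (UNIV :: bool set))}"
      "f \<in> Pi\<^sub>E A U" "Pi\<^sub>E A U \<subseteq> W"
    using assms unfolding cantor_space_def openin_product_topology_alt by blast
  define T where "T = {i \<in> A. U i \<noteq> UNIV}"
  have "cylinder A T f \<subseteq> Pi\<^sub>E A U"
  proof
    fix g assume "g \<in> cylinder A T f"
    then show "g \<in> Pi\<^sub>E A U"
      using U(2) unfolding cylinder_def topspace_cantor_space T_def PiE_iff
      by (metis (mono_tags, lifting) UNIV_I mem_Collect_eq)
  qed
  then show thesis using that[of T] U(1,3) unfolding T_def by auto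
qed

lemma nowhere_dense_disjoint_cylinder:
  assumes "nowhere_dense_in (cantor_space A) F" "finite T0" "T0 \<subseteq> A"
  obtains T b where "finite T" "T0 \<subseteq> T" "T \<subseteq> A" "\<forall>x\<in>T0. b x = c x" "cylinder A T b \<inter> F = {}"
proof -
  let ?C = "cantor_space A"
  have "\<not> cylinder A T0 c \<subseteq> ?C closure_of F"
  proof
    assume "cylinder A T0 c \<subseteq> ?C closure_of F"
    then have "cylinder A T0 c \<subseteq> ?C interior_of (?C closure_of F)"
      using openin_cylinder[OF assms(2,3)] interior_of_maximal by blast
    then show False using assms(1) restrict_in_cylinder[OF assms(3)] unfolding nowhere_dense_in_def by blast
  qed
  then obtain f where f: "f \<in> cylinder A T0 c" "f \<notin> ?C closure_of F" by blast
  have "openin ?C (topspace ?C - ?C closure_of F)"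
    by (rule openin_diff[OF openin_topspace closedin_closure_of])
  moreover have "f \<in> topspace ?C - ?C closure_of F" using f unfolding cylinder_def by blast
  ultimately obtain T where T: "finite T" "T \<subseteq> A" "cylinder A T f \<subseteq> topspace ?C - ?C closure_of F"
    by (rule cylinder_subset_openin)
  have "cylinder A (T0 \<union> T) f \<inter> F = {}"
    using cylinder_antimono[of T "T0 \<union> T" A f] T(3) closure_of_subset_Int[of ?C F] by blast
  moreover have "\<forall>x\<in>T0. f x = c x" using f(1) unfolding cylinder_def by blast
  ultimately show thesis using that[of "T0 \<union> T" f] T assms(2,3) by auto
qed

text \<open>A condition fixes the sets \<open>K i\<close> for \<open>i < len p\<close> as \<open>{x. (i, x) \<in> pts p}\<close>
  and promises that no point of \<open>forb p\<close> will ever be added to their union.\<close>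
record 'a condition =
  len :: nat
  pts :: "(nat \<times> 'a) set"
  forb :: "'a set"

definition conditions :: "'a set \<Rightarrow> (nat \<Rightarrow> 'a set) \<Rightarrow> 'a condition set" where
  "conditions X D = {p. finite (pts p) \<and> finite (forb p) \<and> forb p \<subseteq> X
     \<and> pts p \<subseteq> {..<len p} \<times> X \<and> (\<forall>(i, x)\<in>pts p. x \<in> D i)}"

definition extends :: "'a condition \<Rightarrow> 'a condition \<Rightarrow> bool" where
  "extends p q \<longleftrightarrow> len q \<le> len p \<and> pts p \<inter> ({..<len q} \<times> UNIV) = pts q \<and> forb q \<subseteq> forb p
     \<and> (\<forall>(i, x)\<in>pts p - pts q. x \<notin> forb q)"

lemma countable_conditions:
  assumes "countable X" shows "countable (conditions X D)"
proof -
  let ?mk = "\<lambda>(n, s, f). \<lparr>len = n, pts = s, forb = f\<rparr>"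
  have "conditions X D \<subseteq> ?mk ` (UNIV \<times> {s. finite s \<and> s \<subseteq> UNIV \<times> X} \<times> {f. finite f \<and> f \<subseteq> X})"
  proof
    fix p assume "p \<in> conditions X D"
    then show "p \<in> ?mk ` (UNIV \<times> {s. finite s \<and> s \<subseteq> UNIV \<times> X} \<times> {f. finite f \<and> f \<subseteq> X})"
      unfolding conditions_def by (intro image_eqI[of _ _ "(len p, pts p, forb p)"]) auto
  qed
  moreover have "countable {s. finite s \<and> s \<subseteq> (UNIV :: nat set) \<times> X}"
    using assms by (intro countable_Collect_finite_subset countable_SIGMA) auto
  moreover have "countable {f. finite f \<and> f \<subseteq> X}" using assms by (rule countable_Collect_finite_subset)
  ultimately show ?thesis
    by (elim countable_subset) (intro countable_image countable_SIGMA; simp)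
qed

lemma extends_refl: "p \<in> conditions X D \<Longrightarrow> extends p p"
  unfolding conditions_def extends_def by auto

lemma extends_trans:
  assumes pq: "extends p q" and qr: "extends q r"
  shows "extends p r"
proof -
  have "pts p \<inter> ({..<len r} \<times> UNIV) = pts p \<inter> ({..<len q} \<times> UNIV) \<inter> ({..<len r} \<times> UNIV)"
    using qr unfolding extends_def by auto
  also have "\<dots> = pts r" using pq qr unfolding extends_def by simp
  finally show ?thesis using pq qr unfolding extends_def by fastforce
qed

lemma extends_antisym:
  assumes "p \<in> conditions X D" "extends p q" "extends q p"
  shows "p = q"
proof (rule condition.equality)
  show "len p = len q" using assms(2,3) unfolding extends_def by simp
  then have "pts q = pts p \<inter> ({..<len p} \<times> UNIV)" using assms(2) unfolding extends_def by simp
  also have "\<dots> = pts p" using assms(1) unfolding conditions_def by blast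
  finally show "pts p = pts q" by simp
  show "forb p = forb q" using assms(2,3) unfolding extends_def by blast
qed simp

lemma extends_pts_subset: "extends p q \<Longrightarrow> pts q \<subseteq> pts p"
  unfolding extends_def by blast

definition extends_directed :: "'a condition set \<Rightarrow> bool" where
  "extends_directed G \<longleftrightarrow> (\<forall>p\<in>G. \<forall>q\<in>G. \<exists>r\<in>G. extends r p \<and> extends r q)"

definition generic_part :: "'a condition set \<Rightarrow> nat \<Rightarrow> 'a set" where
  "generic_part G i = {x. \<exists>q\<in>G. (i, x) \<in> pts q}"

lemma generic_part_eq:
  assumes "extends_directed G" "q \<in> G" "i < len q"
  shows "generic_part G i = {x. (i, x) \<in> pts q}"
proof
  show "generic_part G i \<subseteq> {x. (i, x) \<in> pts q}"
  proof
    fix x assume "x \<in> generic_part G i"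
    then obtain p where "p \<in> G" "(i, x) \<in> pts p" unfolding generic_part_def by blast
    then obtain r where "extends r p" "extends r q" using assms(1,2) unfolding extends_directed_def by blast
    then show "x \<in> {x. (i, x) \<in> pts q}"
      using \<open>(i, x) \<in> pts p\<close> assms(3) extends_pts_subset unfolding extends_def by blast
  qed
qed (use assms(2) in \<open>auto simp: generic_part_def\<close>)

lemma forb_disjoint_generic_part:
  assumes "extends_directed G" "q \<in> G" "x \<in> forb q" "x \<notin> snd ` pts q"
  shows "x \<notin> generic_part G i"
proof
  assume "x \<in> generic_part G i"
  then obtain p where "p \<in> G" "(i, x) \<in> pts p" unfolding generic_part_def by blast
  then obtain r where "extends r p" "extends r q" using assms(1,2) unfolding extends_directed_def by blast
  moreover have "(i, x) \<notin> pts q" using assms(4) by force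
  ultimately show False
    using \<open>(i, x) \<in> pts p\<close> assms(3) extends_pts_subset unfolding extends_def by blast
qed

text \<open>A condition settles \<open>F\<close> if it already decides, on a finite \<open>T \<subseteq> A\<close>, the trace on \<open>A\<close>
  of the union of the generic sets, and that decision is incompatible with \<open>F\<close>.\<close>
definition settles :: "'a set \<Rightarrow> ('a \<Rightarrow> bool) set \<Rightarrow> 'a condition \<Rightarrow> bool" where
  "settles A F q \<longleftrightarrow> (\<exists>T. finite T \<and> T \<subseteq> A \<and> T - snd ` pts q \<subseteq> forb q
     \<and> cylinder A T (\<lambda>x. x \<in> snd ` pts q) \<inter> F = {})"

lemma char_point_generic_union_notin:
  assumes "extends_directed G" "q \<in> G" "settles A F q"
  shows "char_point A ((\<Union>i. generic_part G i) \<inter> A) \<notin> F"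
proof -
  obtain T where T: "T \<subseteq> A" "T - snd ` pts q \<subseteq> forb q"
      "cylinder A T (\<lambda>x. x \<in> snd ` pts q) \<inter> F = {}"
    using assms(3) unfolding settles_def by blast
  have "x \<in> (\<Union>i. generic_part G i) \<longleftrightarrow> x \<in> snd ` pts q" if "x \<in> T" for x
    using forb_disjoint_generic_part[OF assms(1,2)] T(2) that assms(2)
    by (force simp: generic_part_def)
  then have "char_point A ((\<Union>i. generic_part G i) \<inter> A) \<in> cylinder A T (\<lambda>x. x \<in> snd ` pts q)"
    using T(1) unfolding cylinder_def char_point_def topspace_cantor_space by auto
  then show ?thesis using T(3) by blast
qed

lemma extends_by_new_level:
  assumes q: "q \<in> conditions X D" and "len q \<le> N" "finite T" "T \<subseteq> X" "Tt \<subseteq> T"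
    and old: "T \<inter> snd ` pts q \<subseteq> Tt" and new: "Tt - snd ` pts q \<subseteq> D N - forb q"
  obtains r where "r \<in> conditions X D" "extends r q" "len r = Suc N"
    "T \<inter> snd ` pts r = Tt" "T - Tt \<subseteq> forb r"
proof -
  define r where "r = \<lparr>len = Suc N, pts = pts q \<union> {N} \<times> (Tt - snd ` pts q), forb = forb q \<union> (T - Tt)\<rparr>"
  have "{..<len q} \<times> X \<subseteq> {..<Suc N} \<times> X" using assms(2) by auto
  then have "pts q \<subseteq> {..<Suc N} \<times> X" using q unfolding conditions_def by blast
  moreover have "finite Tt" using assms(3,5) finite_subset by blast
  ultimately have "r \<in> conditions X D" using q assms(3-5) new unfolding conditions_def r_def by auto
  moreover have "extends r q" using q assms(2) new unfolding conditions_def extends_def r_def by auto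
  moreover have "snd ` pts r = snd ` pts q \<union> Tt" unfolding r_def by (auto simp: image_Un)
  then have "T \<inter> snd ` pts r = Tt" using old assms(5) by blast
  ultimately show thesis using that unfolding r_def by simp
qed

lemma exists_settling_extension:
  assumes q: "q \<in> conditions X D" and "A \<subseteq> X" "\<And>n. finite (A - D n)"
    and "nowhere_dense_in (cantor_space A) F"
  obtains r where "r \<in> conditions X D" "extends r q" "m < len r" "settles A F r"
proof -
  define N where "N = max (len q) m"
  define T0 where "T0 = A \<inter> (snd ` pts q \<union> forb q \<union> (A - D N))"
  have "finite T0" using q assms(3) unfolding T0_def conditions_def by blast
  moreover have "T0 \<subseteq> A" unfolding T0_def by blast
  ultimately obtain T b where T: "finite T" "T0 \<subseteq> T" "T \<subseteq> A" "\<forall>x\<in>T0. b x = (x \<in> snd ` pts q)"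
      "cylinder A T b \<inter> F = {}"
    by (rule nowhere_dense_disjoint_cylinder[OF assms(4)])
  define Tt where "Tt = {x \<in> T. b x}"
  have "T \<inter> snd ` pts q \<subseteq> Tt" "Tt - snd ` pts q \<subseteq> D N - forb q"
    using T(3,4) unfolding T0_def Tt_def by auto
  moreover have "len q \<le> N" "T \<subseteq> X" "Tt \<subseteq> T" using T(3) assms(2) unfolding N_def Tt_def by auto
  ultimately obtain r where r: "r \<in> conditions X D" "extends r q" "len r = Suc N"
      "T \<inter> snd ` pts r = Tt" "T - Tt \<subseteq> forb r"
    using extends_by_new_level[OF q _ T(1)] by metis
  have "cylinder A T (\<lambda>x. x \<in> snd ` pts r) = cylinder A T b"
    using r(4) unfolding cylinder_def Tt_def by auto
  moreover have "T - snd ` pts r \<subseteq> forb r" using r(4,5) by blast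
  ultimately have "settles A F r" using T(1,3,5) unfolding settles_def by (intro exI[of _ T]) simp
  then show thesis using that r unfolding N_def by simp
qed

lemma generic_sets_avoid_meager:
  fixes A :: "'j \<Rightarrow> 'a set" and M :: "'j \<Rightarrow> ('a \<Rightarrow> bool) set" and D :: "nat \<Rightarrow> 'a set"
  assumes "countable X" "MA_countable (J \<times> (UNIV :: nat set))" "J \<noteq> {}"
    and A: "\<And>j. j \<in> J \<Longrightarrow> A j \<subseteq> X" "\<And>j n. j \<in> J \<Longrightarrow> finite (A j - D n)"
    and M: "\<And>j. j \<in> J \<Longrightarrow> meager_in (cantor_space (A j)) (M j)"
  obtains K where "\<forall>i. finite (K i) \<and> K i \<subseteq> D i"
    "\<forall>j\<in>J. char_point (A j) ((\<Union>i. K i) \<inter> A j) \<notin> M j"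
proof -
  have "\<forall>j\<in>J. \<exists>F. (\<forall>m::nat. nowhere_dense_in (cantor_space (A j)) (F m)) \<and> M j \<subseteq> (\<Union>m. F m)"
    using M unfolding meager_in_def by blast
  then obtain F where F: "\<forall>j\<in>J. (\<forall>m::nat. nowhere_dense_in (cantor_space (A j)) (F j m)) \<and> M j \<subseteq> (\<Union>m. F j m)"
    by (rule bchoice[THEN exE])
  define E where "E = (\<lambda>(j, m). {q \<in> conditions X D. m < len q \<and> settles (A j) (F j m) q})"
  have dense: "\<forall>jm\<in>J \<times> (UNIV :: nat set).
      E jm \<subseteq> conditions X D \<and> (\<forall>q\<in>conditions X D. \<exists>r\<in>E jm. extends r q)"
  proof (intro ballI conjI)
    fix jm q assume "jm \<in> J \<times> (UNIV :: nat set)" "q \<in> conditions X D"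
    then obtain j m where "jm = (j, m)" "j \<in> J" by blast
    have "nowhere_dense_in (cantor_space (A j)) (F j m)" using F \<open>j \<in> J\<close> by blast
    then obtain r where "r \<in> conditions X D" "extends r q" "m < len r" "settles (A j) (F j m) r"
      by (rule exists_settling_extension[OF \<open>q \<in> conditions X D\<close> A(1,2)[OF \<open>j \<in> J\<close>]])
    then show "\<exists>r\<in>E jm. extends r q" unfolding \<open>jm = (j, m)\<close> E_def by auto
  qed (auto simp: E_def)
  have "\<lparr>len = 0, pts = {}, forb = {}\<rparr> \<in> conditions X D" unfolding conditions_def by simp
  then have nonempty: "conditions X D \<noteq> {}" by blast
  have refl: "\<forall>p\<in>conditions X D. extends p p" using extends_refl by blast
  have trans: "\<forall>p\<in>conditions X D. \<forall>q\<in>conditions X D. \<forall>r\<in>conditions X D.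
      extends p q \<and> extends q r \<longrightarrow> extends p r" using extends_trans by blast
  have antisym: "\<forall>p\<in>conditions X D. \<forall>q\<in>conditions X D. extends p q \<and> extends q p \<longrightarrow> p = q"
    using extends_antisym by blast
  obtain G where G: "G \<subseteq> conditions X D" "extends_directed G"
      "\<forall>jm\<in>J \<times> (UNIV :: nat set). G \<inter> E jm \<noteq> {}"
    using MA_countable_generic_filter[OF assms(2) countable_conditions[OF assms(1)] nonempty
        refl trans antisym dense]
    unfolding extends_directed_def by blast
  show thesis
  proof (rule that[of "generic_part G"]; intro allI ballI conjI)
    fix i
    obtain j where "j \<in> J" using assms(3) by blast
    then have "G \<inter> E (j, i) \<noteq> {}" using G(3) by blast
    then obtain q where "q \<in> G" "i < len q" unfolding E_def by auto
    then have "generic_part G i \<subseteq> snd ` pts q" using generic_part_eq[OF G(2)] by force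
    moreover have "finite (pts q)" using G(1) \<open>q \<in> G\<close> unfolding conditions_def by blast
    ultimately show "finite (generic_part G i)" using finite_subset by blast
  next
    fix i show "generic_part G i \<subseteq> D i" using G(1) unfolding generic_part_def conditions_def by blast
  next
    fix j assume "j \<in> J"
    have "char_point (A j) ((\<Union>i. generic_part G i) \<inter> A j) \<notin> F j m" for m
    proof -
      have "G \<inter> E (j, m) \<noteq> {}" using G(3) \<open>j \<in> J\<close> by blast
      then obtain q where "q \<in> G" "settles (A j) (F j m) q" unfolding E_def by auto
      then show ?thesis by (rule char_point_generic_union_notin[OF G(2)])
    qed
    then show "char_point (A j) ((\<Union>i. generic_part G i) \<inter> A j) \<notin> M j" using F \<open>j \<in> J\<close> by blast
  qed
qed

lemma ideal_on_downward: "ideal_on X I \<Longrightarrow> A \<in> I \<Longrightarrow> B \<subseteq> A \<Longrightarrow> B \<in> I"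
proof -
  assume "ideal_on X I"
  then have "\<forall>A B. A \<in> I \<and> B \<subseteq> A \<longrightarrow> B \<in> I" unfolding ideal_on_def by (elim conjE)
  then show "A \<in> I \<Longrightarrow> B \<subseteq> A \<Longrightarrow> B \<in> I" by blast
qed

lemma ideal_on_Un: "ideal_on X I \<Longrightarrow> A \<in> I \<Longrightarrow> B \<in> I \<Longrightarrow> A \<union> B \<in> I"
proof -
  assume "ideal_on X I"
  then have "\<forall>A B. A \<in> I \<and> B \<in> I \<longrightarrow> A \<union> B \<in> I" unfolding ideal_on_def by (elim conjE)
  then show "A \<in> I \<Longrightarrow> B \<in> I \<Longrightarrow> A \<union> B \<in> I" by blast
qed

lemma ideal_on_finite: "ideal_on X I \<Longrightarrow> finite F \<Longrightarrow> F \<subseteq> X \<Longrightarrow> F \<in> I"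
proof -
  assume "ideal_on X I"
  then have "\<forall>F. finite F \<and> F \<subseteq> X \<longrightarrow> F \<in> I" unfolding ideal_on_def by (elim conjE)
  then show "finite F \<Longrightarrow> F \<subseteq> X \<Longrightarrow> F \<in> I" by blast
qed
lemma p_plus_pseudo_intersection_below:
  assumes "ideal_on X I" "p_plus X I" "\<And>n. A n \<in> positive_sets X I" "\<And>n. A (Suc n) \<subseteq> A n"
  obtains B where "B \<in> positive_sets X I" "B \<subseteq> A 0" "\<forall>n. finite (B - A n)"
proof -
  have "\<exists>B\<in>positive_sets X I. \<forall>n. finite (B - A n)"
    using assms(2)[unfolded p_plus_def, rule_format, of A] assms(3,4) by blast
  then obtain B where B: "B \<subseteq> X" "B \<notin> I" "\<And>n. finite (B - A n)"
    unfolding positive_sets_def by blast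
  have "B \<inter> A 0 \<notin> I"
  proof
    assume "B \<inter> A 0 \<in> I"
    moreover have "B - A 0 \<in> I" using ideal_on_finite[OF assms(1) B(3)] B(1) by blast
    ultimately have "(B \<inter> A 0) \<union> (B - A 0) \<in> I" by (rule ideal_on_Un[OF assms(1)])
    then show False using B(2) by (simp add: Int_Diff_Un)
  qed
  moreover have "finite (B \<inter> A 0 - A n)" for n using B(3) by (rule finite_subset[rotated]) blast
  ultimately show thesis using that[of "B \<inter> A 0"] B(1) unfolding positive_sets_def by blast
qed
lemma positive_sets_if_crowded_dense:
  assumes "I_tau_crowded X I \<tau> D" "dense_in \<tau> D" "openin \<tau> U" "U \<noteq> {}"
  shows "D \<inter> U \<in> positive_sets X I"
  using assms unfolding I_tau_crowded_def dense_in_def dense_intersects_open by blast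

lemma positive_pseudo_intersection_in_open:
  assumes "ideal_on X I" "p_plus X I" "\<And>i. D (Suc i) \<subseteq> D i"
    "\<And>i. I_tau_crowded X I \<tau> (D i)" "\<And>i. dense_in \<tau> (D i)" "openin \<tau> U" "U \<noteq> {}"
  obtains A where "A \<in> positive_sets X I" "A \<subseteq> U" "\<forall>n. finite (A - D n)"
proof -
  have pos: "D n \<inter> U \<in> positive_sets X I" for n using positive_sets_if_crowded_dense assms(4-7) by blast
  have mono: "D (Suc n) \<inter> U \<subseteq> D n \<inter> U" for n using assms(3) by blast
  obtain A where A: "A \<in> positive_sets X I" "A \<subseteq> D 0 \<inter> U" "\<forall>n. finite (A - D n \<inter> U)"
    by (rule p_plus_pseudo_intersection_below[where A = "\<lambda>n. D n \<inter> U", OF assms(1,2) pos mono])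
  have "finite (A - D n)" for n using A(3)[rule_format, of n] by (rule finite_subset[rotated]) blast
  then show thesis using that A(1,2) by blast
qed

lemma positive_pseudo_intersections_on_pi_base:
  assumes "ideal_on X I" "p_plus X I" "\<And>i. D (Suc i) \<subseteq> D i"
    "\<And>i. I_tau_crowded X I \<tau> (D i)" "\<And>i. dense_in \<tau> (D i)" "pi_base \<tau> \<B>"
  obtains A where "\<forall>B\<in>\<B>. A B \<in> positive_sets X I \<and> A B \<subseteq> B \<and> (\<forall>n. finite (A B - D n))"
proof -
  have "\<forall>B\<in>\<B>. \<exists>A. A \<in> positive_sets X I \<and> A \<subseteq> B \<and> (\<forall>n. finite (A - D n))"
  proof
    fix B assume "B \<in> \<B>"
    then have "openin \<tau> B" "B \<noteq> {}" using assms(6) unfolding pi_base_def by blast+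
    then obtain A where "A \<in> positive_sets X I" "A \<subseteq> B" "\<forall>n. finite (A - D n)"
      by (rule positive_pseudo_intersection_in_open[where D = D and \<tau> = \<tau>, OF assms(1-5)])
    then show "\<exists>A. A \<in> positive_sets X I \<and> A \<subseteq> B \<and> (\<forall>n. finite (A - D n))" by blast
  qed
  then show thesis using that by (rule bchoice[THEN exE])
qed

lemma dense_crowded_if_positive_on_pi_base:
  assumes "ideal_on X I" "topspace \<tau> = X" "pi_base \<tau> \<B>" "U \<subseteq> X" "\<And>B. B \<in> \<B> \<Longrightarrow> U \<inter> B \<notin> I"
  shows "dense_in \<tau> U" "I_tau_crowded X I \<tau> U"
proof -
  have positive: "U \<inter> V \<notin> I" if V: "openin \<tau> V" "V \<noteq> {}" for V
  proof
    assume "U \<inter> V \<in> I"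
    obtain B where "B \<in> \<B>" "B \<subseteq> V" using assms(3) V unfolding pi_base_def by blast
    then have "U \<inter> B \<in> I" using ideal_on_downward[OF assms(1) \<open>U \<inter> V \<in> I\<close>] by blast
    then show False using assms(5) \<open>B \<in> \<B>\<close> by blast
  qed
  have "{} \<in> I" using ideal_on_finite[OF assms(1), of "{}"] by simp
  show "dense_in \<tau> U"
    unfolding dense_in_def dense_intersects_open
  proof (intro conjI allI impI)
    show "U \<subseteq> topspace \<tau>" using assms(2,4) by simp
    fix V assume "openin \<tau> V \<and> V \<noteq> {}"
    then show "U \<inter> V \<noteq> {}" using positive[of V] \<open>{} \<in> I\<close> by auto
  qed
  show "I_tau_crowded X I \<tau> U"
    unfolding I_tau_crowded_def positive_sets_def
  proof (intro allI impI)
    fix V assume "openin \<tau> V"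
    then show "U \<inter> V = {} \<or> U \<inter> V \<in> Pow X - I" using positive[of V] assms(4) by blast
  qed
qed

theorem mainTheorem6:
  fixes X :: "'a set" and I :: "'a set set" and \<tau> :: "'a topology"
    and D :: "nat \<Rightarrow> 'a set"
  assumes "countable X" and "infinite X"
    and "ideal_on X I" and "p_plus X I" and "hereditarily_meager X I"
    and "topspace \<tau> = X" and "I_crowded_topology I \<tau>"
    and "piw_less_mc \<tau>"
    and "\<And>i. D (Suc i) \<subseteq> D i"
    and "\<And>i. I_tau_crowded X I \<tau> (D i)"
    and "\<And>i. dense_in \<tau> (D i)"
  shows "\<exists>K :: nat \<Rightarrow> 'a set. (\<forall>i. finite (K i) \<and> K i \<subseteq> D i)
           \<and> dense_in \<tau> (\<Union>i. K i) \<and> I_tau_crowded X I \<tau> (\<Union>i. K i)"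
proof -
  obtain \<B> where pb: "pi_base \<tau> \<B>" and small: "\<forall>S :: nat set set. \<not> MA_countable S \<longrightarrow> \<B> \<prec> S"
    using assms(8) unfolding piw_less_mc_def by blast
  have \<B>X: "\<B> \<subseteq> Pow X" using pb assms(6) openin_subset unfolding pi_base_def by blast
  have "X \<noteq> {}" using assms(2) by blast
  then have "\<B> \<noteq> {}" using pb openin_topspace[of \<tau>] assms(6) unfolding pi_base_def by blast
  obtain A where A: "\<forall>B\<in>\<B>. A B \<in> positive_sets X I \<and> A B \<subseteq> B \<and> (\<forall>n. finite (A B - D n))"
    by (rule positive_pseudo_intersections_on_pi_base[where D = D, OF assms(3,4,9,10,11) pb])
  let ?M = "\<lambda>B. char_point (A B) ` (I \<inter> Pow (A B))"
  have meager: "meager_in (cantor_space (A B)) (?M B)" if "B \<in> \<B>" for B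
    using assms(5) A that unfolding hereditarily_meager_def by blast
  have AX: "A B \<subseteq> X" and Afin: "finite (A B - D n)" if "B \<in> \<B>" for B n using A \<B>X that by blast+
  obtain K where K: "\<forall>i. finite (K i) \<and> K i \<subseteq> D i"
      "\<forall>B\<in>\<B>. char_point (A B) ((\<Union>i. K i) \<inter> A B) \<notin> ?M B"
    by (rule generic_sets_avoid_meager[where A = A and D = D and M = ?M, OF assms(1)
          MA_countable_times_nat_if_lesspoll_failures[OF assms(1) \<B>X small] \<open>\<B> \<noteq> {}\<close> AX Afin meager])
  have "(\<Union>i. K i) \<inter> B \<notin> I" if "B \<in> \<B>" for B
  proof
    assume "(\<Union>i. K i) \<inter> B \<in> I"
    then have "(\<Union>i. K i) \<inter> A B \<in> I \<inter> Pow (A B)" using ideal_on_downward[OF assms(3)] A that by blast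
    then show False using K(2) that by blast
  qed
  moreover have "(\<Union>i. K i) \<subseteq> X" using K(1) assms(6,11) unfolding dense_in_def by blast
  ultimately show ?thesis using dense_crowded_if_positive_on_pi_base[OF assms(3,6) pb] K(1) by blast
qed

end
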